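(* Let $(V,\ell)$ be an $L_\infty$-algebra with finite-dimensional components, $V_0=\mathbb{R}^n$, such that $H^1(V,\ell)=0$, and let $h_1:V_1\to V_0$, $h_2:V_2\to V_1$ be linear maps with $\ell_1\circ h_1+h_2\circ\ell_1=\mathrm{id}_{V_1}$. Let $u_0=0$ and $u_1\in\ker(\ell_1|_{V_0})$, and define recursively $u_{k+1}=-h_1(Obs^k)$ for $k\geq1$, where $Obs^k=\sum_{i=2}^{k+1}\sum_{\vec r_i=k+1}\binom{k+1}{\vec r_i}\frac1{i!}\ell_i(u_{r_1},\ldots,u_{r_i})$. Then $u[\![t]\!]=\sum_{k\geq0}\frac{u_k}{k!}t^k\in\mathbb{R}^n[\![t]\!]$ is a formal Maurer–Cartan element.
   Context: An $L_\infty$-algebra is a sequence $\ell=(\ell_k)_{k\geq0}$ of graded symmetric $k$-linear degree-$1$ maps $\ell_k:V^{\times k}\to V$, $\ell_0=0$, satisfying the $L_\infty$ Jacobi identities; $H^1(V,\ell)=\ker(\ell_1:V_1\to V_2)/\operatorname{im}(\ell_1:V_0\to V_1)$. $\sum_{\vec r_i=m}$ sums over tuples $(r_1,\ldots,r_i)$ of positive integers with sum $m$ and $\binom{k+1}{\vec r_i}=\frac{(k+1)!}{r_1!\cdots r_i!}$. A formal Maurer–Cartan element is a Maurer–Cartan element of $V[\![t]\!]$ with $t$-linearly extended $\ell_k$; for $u[\![t]\!]=\sum\frac{u_k}{k!}t^k$ with $u_0=0$ this means $\ell_1(u_{k+1})+\sum_{i=2}^{k+1}\sum_{\vec r_i=k+1}\binom{k+1}{\vec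 r_i}\frac1{i!}\ell_i(u_{r_1},\ldots,u_{r_i})=0$ for all $k\geq0$. *)

theory Defs
  imports "HOL-Analysis.Analysis" "HOL-Combinatorics.Permutations"
begin

text \<open>
  A graded real vector space is modelled by a family of subspaces V d (d an integer)
  of an ambient real vector space 'v; the graded space is the (external) direct sum of
  the V d.  A homogeneous element is a pair (d, v) with v in V d.  Multilinear maps on
  the direct sum are determined by their values on homogeneous arguments, so the
  brackets are given as functions l k on lists of homogeneous elements; for homogeneous
  arguments of degrees d1..dk the value of the degree-1 map l k lies in V (d1+...+dk+1).
\<close>

definition homog :: "(int \<Rightarrow> 'v::real_vector set) \<Rightarrow> (int \<times> 'v) list \<Rightarrow> bool" where
  "homog V xs \<longleftrightarrow> (\<forall>x\<in>set xs. snd x \<in> V (fst x))"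

definition graded_space :: "(int \<Rightarrow> 'v::real_vector set) \<Rightarrow> bool" where
  "graded_space V \<longleftrightarrow> (\<forall>d. subspace (V d))"

definition finite_dim_components :: "(int \<Rightarrow> 'v::real_vector set) \<Rightarrow> bool" where
  "finite_dim_components V \<longleftrightarrow> (\<forall>d. \<exists>B. finite B \<and> span B = V d)"

text \<open>Koszul sign of the permutation p acting on homogeneous elements xs:
  the permuted tuple is permute_list p xs, i.e. (x_{p 0}, ..., x_{p (k-1)}).\<close>
definition koszul_sign :: "(nat \<Rightarrow> nat) \<Rightarrow> (int \<times> 'v) list \<Rightarrow> real" where
  "koszul_sign p xs =
     (if even (\<Sum>(a, b) \<in> {(a, b). a < b \<and> b < length xs \<and> p b < p a}.
                  fst (xs ! p a) * fst (xs ! p b))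
      then 1 else -1)"

definition unshuffles :: "nat \<Rightarrow> nat \<Rightarrow> (nat \<Rightarrow> nat) set" where
  "unshuffles i n = {\<sigma>. \<sigma> permutes {..<n} \<and>
      (\<forall>a b. a < b \<and> b < i \<longrightarrow> \<sigma> a < \<sigma> b) \<and>
      (\<forall>a b. i \<le> a \<and> a < b \<and> b < n \<longrightarrow> \<sigma> a < \<sigma> b)}"

definition multilinear_bracket ::
  "(int \<Rightarrow> 'v::real_vector set) \<Rightarrow> nat \<Rightarrow> ((int \<times> 'v) list \<Rightarrow> 'v) \<Rightarrow> bool" where
  "multilinear_bracket V k f \<longleftrightarrow>
     (\<forall>xs j d a b c. homog V xs \<and> length xs = k \<and> j < k \<and> fst (xs ! j) = d \<and>
        a \<in> V d \<and> b \<in> V d \<longrightarrow>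
        f (xs[j := (d, c *\<^sub>R a + b)]) = c *\<^sub>R f (xs[j := (d, a)]) + f (xs[j := (d, b)]))"

definition L_infinity_algebra ::
  "(int \<Rightarrow> 'v::real_vector set) \<Rightarrow> (nat \<Rightarrow> (int \<times> 'v) list \<Rightarrow> 'v) \<Rightarrow> bool" where
  "L_infinity_algebra V l \<longleftrightarrow>
     graded_space V \<and>
     l 0 [] = 0 \<and>
     (\<forall>k. multilinear_bracket V k (l k)) \<and>
     (\<forall>k xs. homog V xs \<and> length xs = k \<longrightarrow>
        l k xs \<in> V (sum_list (map fst xs) + 1)) \<and>
     (\<forall>k xs p. homog V xs \<and> length xs = k \<and> p permutes {..<k} \<longrightarrow>
        l k (permute_list p xs) = koszul_sign p xs *\<^sub>R l k xs) \<and>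
     (\<forall>n xs. 1 \<le> n \<and> homog V xs \<and> length xs = n \<longrightarrow>
        (\<Sum>i\<in>{1..n}. \<Sum>\<sigma>\<in>unshuffles i n.
           koszul_sign \<sigma> xs *\<^sub>R
             (let ys = permute_list \<sigma> xs; as = take i ys
              in l (n - i + 1) ((sum_list (map fst as) + 1, l i as) # drop i ys))) = 0)"

definition H1_vanishes ::
  "(int \<Rightarrow> 'v::real_vector set) \<Rightarrow> (nat \<Rightarrow> (int \<times> 'v) list \<Rightarrow> 'v) \<Rightarrow> bool" where
  "H1_vanishes V l \<longleftrightarrow>
     (\<forall>x\<in>V 1. l 1 [(1, x)] = 0 \<longrightarrow> (\<exists>y\<in>V 0. x = l 1 [(0, y)]))"

definition linear_between :: "'v::real_vector set \<Rightarrow> 'v set \<Rightarrow> ('v \<Rightarrow> 'v) \<Rightarrow> bool" where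
  "linear_between A B f \<longleftrightarrow> (\<forall>x\<in>A. f x \<in> B) \<and>
     (\<forall>x\<in>A. \<forall>y\<in>A. \<forall>c. f (c *\<^sub>R x + y) = c *\<^sub>R f x + f y)"

definition compositions :: "nat \<Rightarrow> nat \<Rightarrow> nat list set" where
  "compositions i m = {rs. length rs = i \<and> (\<forall>r\<in>set rs. 0 < r) \<and> sum_list rs = m}"

definition multinom :: "nat \<Rightarrow> nat list \<Rightarrow> real" where
  "multinom m rs = fact m / (\<Prod>r\<leftarrow>rs. fact r)"

definition Obs :: "(nat \<Rightarrow> (int \<times> 'v::real_vector) list \<Rightarrow> 'v) \<Rightarrow> (nat \<Rightarrow> 'v) \<Rightarrow> nat \<Rightarrow> 'v" where
  "Obs l u k = (\<Sum>i\<in>{2..k+1}. \<Sum>rs\<in>compositions i (k+1).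
       (multinom (k+1) rs / fact i) *\<^sub>R l i (map (\<lambda>r. (0, u r)) rs))"

text \<open>u[[t]] = sum_k u_k/k! t^k (coefficient sequence u, with u_0 = 0 and u_k in V_0)
  is a formal Maurer-Cartan element: the equation in V[[t]] unfolds coefficientwise to
  l_1(u_{k+1}) + Obs^k = 0 for all k.\<close>
definition formal_MC ::
  "(int \<Rightarrow> 'v::real_vector set) \<Rightarrow> (nat \<Rightarrow> (int \<times> 'v) list \<Rightarrow> 'v) \<Rightarrow> (nat \<Rightarrow> 'v) \<Rightarrow> bool" where
  "formal_MC V l u \<longleftrightarrow> u 0 = 0 \<and> (\<forall>k. u k \<in> V 0) \<and>
     (\<forall>k. l 1 [(0, u (k + 1))] + Obs l u k = 0)"

end

theory Submission
  imports Defs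
begin

text \<open>
  Let F_m be the coefficient of t^m/m! in the curvature sum_i 1/i! l_i(u[[t]], ..., u[[t]]),
  so that F_(k+1) = l_1(u_(k+1)) + Obs^k; we show F_m = 0 by strong induction on m.
  Summing the Jacobi identities on degree-0 arguments u_(r_1), ..., u_(r_n) over all compositions
  of m with multinomial weights, and regrouping the nested brackets l(l(u_ps), u_qs) by their
  outer arguments qs, gives a Bianchi identity sum_qs c_qs l(F_(m - |qs|), u_qs) = 0.
  By induction only the term qs = [] survives, so l_1(F_(k+1)) = 0; as l_1 l_1 = 0, this says
  that Obs^k is an l_1-cocycle. The homotopy then gives Obs^k = l_1(h_1 Obs^k), hence
  F_(k+1) = l_1(u_(k+1) + h_1 Obs^k) = 0.
\<close>

section \<open>Unshuffles\<close>

lemma sorted_list_of_set_set_strict: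
  "sorted_wrt (<) xs \<Longrightarrow> sorted_list_of_set (set xs) = xs"
  by (simp add: sorted_list_of_set_sort_remdups strict_sorted_iff sorted_sort_id distinct_remdups_id)

lemma map_unshuffle:
  assumes \<sigma>: "\<sigma> \<in> unshuffles i n" and "i \<le> n"
  shows "map \<sigma> [0..<n] =
    sorted_list_of_set (\<sigma> ` {..<i}) @ sorted_list_of_set ({..<n} - \<sigma> ` {..<i})"
proof -
  have perm: "\<sigma> permutes {..<n}" using \<sigma> by (simp add: unshuffles_def)
  have split: "[0..<n] = [0..<i] @ [i..<n]"
    using upt_add_eq_append[of 0 i "n - i"] \<open>i \<le> n\<close> by simp
  have "{..<n} - \<sigma> ` {..<i} = \<sigma> ` {..<n} - \<sigma> ` {..<i}"
    by (simp add: permutes_image[OF perm])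
  also have "\<dots> = \<sigma> ` ({..<n} - {..<i})"
    by (rule image_set_diff[OF permutes_inj[OF perm], symmetric])
  also have "\<dots> = set (map \<sigma> [i..<n])" by auto
  finally have compl: "{..<n} - \<sigma> ` {..<i} = set (map \<sigma> [i..<n])" .
  have first: "\<sigma> ` {..<i} = set (map \<sigma> [0..<i])" by (simp add: atLeast0LessThan)
  have sorted: "sorted_wrt (<) (map \<sigma> [0..<i])" "sorted_wrt (<) (map \<sigma> [i..<n])"
    using \<sigma> by (auto simp: unshuffles_def sorted_wrt_map sorted_wrt_iff_nth_less)
  have "sorted_list_of_set (\<sigma> ` {..<i}) = map \<sigma> [0..<i]"
    unfolding first using sorted(1) by (rule sorted_list_of_set_set_strict)
  moreover have "sorted_list_of_set ({..<n} - \<sigma> ` {..<i}) = map \<sigma> [i..<n]"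
    unfolding compl using sorted(2) by (rule sorted_list_of_set_set_strict)
  ultimately show ?thesis by (simp add: split)
qed

lemma unshuffles_eqI:
  assumes \<sigma>: "\<sigma> \<in> unshuffles i n" and \<tau>: "\<tau> \<in> unshuffles i n" and "i \<le> n"
    and "\<sigma> ` {..<i} = \<tau> ` {..<i}"
  shows "\<sigma> = \<tau>"
proof
  fix x
  show "\<sigma> x = \<tau> x"
  proof (cases "x < n")
    case True
    have "map \<sigma> [0..<n] = map \<tau> [0..<n]"
      using map_unshuffle[OF \<sigma> \<open>i \<le> n\<close>] map_unshuffle[OF \<tau> \<open>i \<le> n\<close>] assms(4) by simp
    then show ?thesis using True by (metis nth_map_upt diff_zero add_0)
  next
    case False
    moreover have "\<sigma> permutes {..<n}" "\<tau> permutes {..<n}"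
      using \<sigma> \<tau> by (simp_all add: unshuffles_def)
    ultimately show ?thesis by (simp add: permutes_not_in)
  qed
qed

lemma unshuffle_with_image:
  assumes S: "S \<subseteq> {..<n}" and card: "card S = i"
  obtains \<sigma> where "\<sigma> \<in> unshuffles i n" "\<sigma> ` {..<i} = S"
proof -
  define L1 where "L1 = sorted_list_of_set S"
  define L2 where "L2 = sorted_list_of_set ({..<n} - S)"
  define \<sigma> where "\<sigma> x = (if x < n then (L1 @ L2) ! x else x)" for x
  have "finite S" using S finite_subset by blast
  have len1: "length L1 = i" and len2: "length L2 = n - i" and "i \<le> n"
    using \<open>finite S\<close> S card by (auto simp: L1_def L2_def card_Diff_subset card_mono[of "{..<n}" S, simplified])
  have sorted: "sorted_wrt (<) L1" "sorted_wrt (<) L2" by (simp_all add: L1_def L2_def)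
  have "bij_betw ((!) (L1 @ L2)) {..<n} {..<n}"
    by (rule bij_betw_nth) (use sorted len1 len2 \<open>i \<le> n\<close> \<open>finite S\<close> S in
        \<open>auto simp: L1_def L2_def strict_sorted_iff\<close>)
  then have "bij_betw \<sigma> {..<n} {..<n}" by (rule bij_betw_cong[THEN iffD1, rotated]) (simp add: \<sigma>_def)
  then have "\<sigma> permutes {..<n}" by (rule bij_imp_permutes) (simp add: \<sigma>_def)
  moreover have "\<sigma> a < \<sigma> b" if "a < b" "b < i" for a b
    using that sorted len1 \<open>i \<le> n\<close> by (simp add: \<sigma>_def nth_append sorted_wrt_nth_less)
  moreover have "\<sigma> a < \<sigma> b" if "i \<le> a" "a < b" "b < n" for a b
    using that sorted(2) len1 len2 sorted_wrt_nth_less[of "(<)" L2 "a - i" "b - i"]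
    by (simp add: \<sigma>_def nth_append)
  moreover have "\<sigma> ` {..<i} = S"
  proof -
    have "\<sigma> ` {..<i} = (!) L1 ` {..<i}"
      using len1 \<open>i \<le> n\<close> by (auto simp: \<sigma>_def nth_append intro!: image_cong)
    also have "\<dots> = S" using len1 \<open>finite S\<close> nth_image[of i L1] by (simp add: L1_def atLeast0LessThan)
    finally show ?thesis .
  qed
  ultimately have "\<sigma> \<in> unshuffles i n" "\<sigma> ` {..<i} = S" by (auto simp: unshuffles_def)
  then show ?thesis by (rule that)
qed

lemma card_unshuffles:
  assumes "i \<le> n"
  shows "card (unshuffles i n) = n choose i"
proof -
  have "bij_betw (\<lambda>\<sigma>. \<sigma> ` {..<i}) (unshuffles i n) {S. S \<subseteq> {..<n} \<and> card S = i}"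
  proof (rule bij_betwI')
    fix \<sigma> assume "\<sigma> \<in> unshuffles i n"
    then have perm: "\<sigma> permutes {..<n}" by (simp add: unshuffles_def)
    have "\<sigma> ` {..<i} \<subseteq> \<sigma> ` {..<n}"
      using \<open>i \<le> n\<close> by (intro image_mono) auto
    then have "\<sigma> ` {..<i} \<subseteq> {..<n}" by (simp only: permutes_image[OF perm])
    moreover have "card (\<sigma> ` {..<i}) = i"
      using card_image[OF permutes_inj_on[OF perm]] by simp
    ultimately show "\<sigma> ` {..<i} \<in> {S. S \<subseteq> {..<n} \<and> card S = i}" by simp
  next
    fix S assume "S \<in> {S. S \<subseteq> {..<n} \<and> card S = i}"
    then obtain \<sigma> where "\<sigma> \<in> unshuffles i n" "\<sigma> ` {..<i} = S"
      using unshuffle_with_image by blast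
    then show "\<exists>\<sigma>\<in>unshuffles i n. S = \<sigma> ` {..<i}" by blast
  next
    fix \<sigma> \<tau> assume "\<sigma> \<in> unshuffles i n" "\<tau> \<in> unshuffles i n"
    then show "\<sigma> ` {..<i} = \<tau> ` {..<i} \<longleftrightarrow> \<sigma> = \<tau>"
      using unshuffles_eqI[OF _ _ \<open>i \<le> n\<close>] by auto
  qed
  then have "card (unshuffles i n) = card {S. S \<subseteq> {..<n} \<and> card S = i}"
    by (rule bij_betw_same_card)
  then show ?thesis by (simp add: n_subsets)
qed

section \<open>Compositions\<close>

definition all_compositions :: "nat \<Rightarrow> nat list set" where
  "all_compositions m = {rs. rs \<noteq> [] \<and> (\<forall>r\<in>set rs. 0 < r) \<and> sum_list rs = m}"

lemma length_le_sum_list_pos: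
  fixes rs :: "nat list"
  shows "\<forall>r\<in>set rs. 0 < r \<Longrightarrow> length rs \<le> sum_list rs"
  by (induction rs) auto

lemma finite_positive_lists_sum_le:
  "finite {rs :: nat list. (\<forall>r\<in>set rs. 0 < r) \<and> sum_list rs \<le> m}"
proof (rule finite_subset[OF _ finite_lists_length_le[of "{..m}" m]])
  show "{rs. (\<forall>r\<in>set rs. 0 < r) \<and> sum_list rs \<le> m} \<subseteq> {rs. set rs \<subseteq> {..m} \<and> length rs \<le> m}"
    using length_le_sum_list_pos member_le_sum_list by (fastforce intro: order.trans)
qed simp

lemma finite_compositions: "finite (compositions i m)"
  by (rule finite_subset[OF _ finite_positive_lists_sum_le[of m]]) (auto simp: compositions_def)

lemma finite_all_compositions: "finite (all_compositions m)"
  by (rule finite_subset[OF _ finite_positive_lists_sum_le[of m]]) (auto simp: all_compositions_def)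

lemma all_compositions_eq_UN: "all_compositions m = (\<Union>i\<in>{1..m}. compositions i m)"
  using length_le_sum_list_pos
  by (fastforce simp: all_compositions_def compositions_def Suc_le_eq)

lemma sum_all_compositions:
  "(\<Sum>rs\<in>all_compositions m. f rs) = (\<Sum>i=1..m. \<Sum>rs\<in>compositions i m. f rs)"
  unfolding all_compositions_eq_UN
  by (rule sum.UNION_disjoint) (use finite_compositions in \<open>auto simp: compositions_def\<close>)

lemma compositions_1: "0 < m \<Longrightarrow> compositions 1 m = {[m]}"
  by (auto simp: compositions_def length_Suc_conv)

lemma compositions_part_less:
  assumes rs: "rs \<in> compositions i m" and "2 \<le> i" and r: "r \<in> set rs"
  shows "r < m"
proof -
  have pos: "\<forall>x\<in>set (remove1 r rs). 0 < x" and "length (remove1 r rs) = i - 1"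
    using rs r by (auto simp: compositions_def length_remove1 dest: notin_set_remove1)
  then have "0 < sum_list (remove1 r rs)"
    using length_le_sum_list_pos[OF pos] \<open>2 \<le> i\<close> by linarith
  moreover have "m = r + sum_list (remove1 r rs)"
    using rs r sum_list_map_remove1[of r rs id] by (simp add: compositions_def)
  ultimately show ?thesis by linarith
qed

lemma permute_list_inv_permute_list:
  assumes "\<sigma> permutes {..<length xs}"
  shows "permute_list (inv \<sigma>) (permute_list \<sigma> xs) = xs"
  using permute_list_compose[OF permutes_inv[OF assms], of \<sigma>] permutes_inv_o(1)[OF assms]
  by simp

lemma permute_list_in_compositions:
  assumes "\<sigma> permutes {..<n}" "rs \<in> compositions n m"
  shows "permute_list \<sigma> rs \<in> compositions n m"
proof -
  have "mset (permute_list \<sigma> rs) = mset rs"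
    using assms by (simp add: compositions_def)
  then show ?thesis
    using assms(2) by (auto simp: compositions_def dest: mset_eq_setD simp flip: sum_mset_sum_list)
qed

lemma sum_compositions_permute_list:
  assumes \<sigma>: "\<sigma> permutes {..<n}"
  shows "(\<Sum>rs\<in>compositions n m. f (permute_list \<sigma> rs)) = (\<Sum>rs\<in>compositions n m. f rs)"
proof (rule sum.reindex_bij_witness[where i="permute_list (inv \<sigma>)" and j="permute_list \<sigma>"])
  have \<sigma>': "inv \<sigma> permutes {..<n}" by (rule permutes_inv[OF \<sigma>])
  fix rs assume rs: "rs \<in> compositions n m"
  then have n: "length rs = n" by (simp add: compositions_def)
  show "permute_list (inv \<sigma>) (permute_list \<sigma> rs) = rs"
    using permute_list_inv_permute_list[of \<sigma> rs] \<sigma> n by simp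
  show "permute_list \<sigma> (permute_list (inv \<sigma>) rs) = rs"
    using permute_list_inv_permute_list[of "inv \<sigma>" rs] \<sigma>' n inv_inv_eq[OF permutes_bij[OF \<sigma>]]
    by simp
  show "permute_list \<sigma> rs \<in> compositions n m" "permute_list (inv \<sigma>) rs \<in> compositions n m"
    using permute_list_in_compositions \<sigma> \<sigma>' rs by blast+
qed (rule refl)

lemma multinom_permute_list:
  assumes "\<sigma> permutes {..<length rs}"
  shows "multinom m (permute_list \<sigma> rs) = multinom m rs"
  using assms by (metis multinom_def mset_map mset_permute_list prod_mset_prod_list)

lemma multinom_append:
  "multinom m (ps @ qs) * fact (sum_list ps) = multinom m qs * multinom (sum_list ps) ps"
  by (simp add: multinom_def prod_list_zero_iff)

lemma sum_compositions_unshuffles: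
  fixes f :: "nat list \<Rightarrow> 'a::real_vector"
  assumes "i \<le> n"
  shows "(\<Sum>rs\<in>compositions n m. \<Sum>\<sigma>\<in>unshuffles i n. multinom m rs *\<^sub>R f (permute_list \<sigma> rs)) =
    real (n choose i) *\<^sub>R (\<Sum>rs\<in>compositions n m. multinom m rs *\<^sub>R f rs)"
proof -
  have "(\<Sum>rs\<in>compositions n m. multinom m rs *\<^sub>R f (permute_list \<sigma> rs)) =
      (\<Sum>rs\<in>compositions n m. multinom m rs *\<^sub>R f rs)" if "\<sigma> \<in> unshuffles i n" for \<sigma>
  proof -
    have \<sigma>: "\<sigma> permutes {..<n}" using that by (simp add: unshuffles_def)
    have "(\<Sum>rs\<in>compositions n m. multinom m rs *\<^sub>R f (permute_list \<sigma> rs)) =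
        (\<Sum>rs\<in>compositions n m. multinom m (permute_list \<sigma> rs) *\<^sub>R f (permute_list \<sigma> rs))"
      using \<sigma> by (intro sum.cong) (auto simp: compositions_def multinom_permute_list)
    also have "\<dots> = (\<Sum>rs\<in>compositions n m. multinom m rs *\<^sub>R f rs)"
      by (rule sum_compositions_permute_list[OF \<sigma>])
    finally show ?thesis .
  qed
  then show ?thesis
    by (subst sum.swap) (simp add: sum_constant_scaleR card_unshuffles[OF assms])
qed

lemma split_all_compositions:
  assumes rs: "rs \<in> all_compositions m" and i: "1 \<le> i" "i \<le> length rs"
  shows "take i rs \<in> all_compositions (m - sum_list (drop i rs))"
    and "(\<forall>r\<in>set (drop i rs). 0 < r) \<and> sum_list (drop i rs) < m"
proof -
  have pos: "\<forall>r\<in>set (take i rs). 0 < r" "\<forall>r\<in>set (drop i rs). 0 < r" and "take i rs \<noteq> []"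
    using rs i by (auto simp: all_compositions_def dest: in_set_takeD in_set_dropD)
  then have "0 < sum_list (take i rs)" by (cases "take i rs") auto
  moreover have "sum_list (take i rs) + sum_list (drop i rs) = m"
    using rs by (simp add: all_compositions_def flip: sum_list_append)
  ultimately show "take i rs \<in> all_compositions (m - sum_list (drop i rs))"
    and "(\<forall>r\<in>set (drop i rs). 0 < r) \<and> sum_list (drop i rs) < m"
    using pos \<open>take i rs \<noteq> []\<close> by (auto simp: all_compositions_def)
qed

lemma sum_all_compositions_split:
  fixes K :: "nat list \<Rightarrow> nat \<Rightarrow> 'a::comm_monoid_add"
  shows "(\<Sum>rs\<in>all_compositions m. \<Sum>i=1..length rs. K rs i) =
    (\<Sum>qs | (\<forall>r\<in>set qs. 0 < r) \<and> sum_list qs < m.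
       \<Sum>ps\<in>all_compositions (m - sum_list qs). K (ps @ qs) (length ps))"
    (is "_ = (\<Sum>qs\<in>?Q. _)")
proof -
  let ?A = "SIGMA rs:all_compositions m. {1..length rs}"
  let ?B = "SIGMA qs:?Q. all_compositions (m - sum_list qs)"
  let ?split = "\<lambda>(rs, i). (drop i rs, take i rs)"
  let ?K' = "\<lambda>(qs, ps). K (ps @ qs) (length ps)"
  have bij: "bij_betw ?split ?A ?B"
  proof (rule bij_betw_byWitness[where f'="\<lambda>(qs, ps). (ps @ qs, length ps)"])
    show "\<forall>a\<in>?A. (\<lambda>(qs, ps). (ps @ qs, length ps)) (?split a) = a" by (auto simp: min_def)
    show "\<forall>b\<in>?B. ?split ((\<lambda>(qs, ps). (ps @ qs, length ps)) b) = b" by auto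
    show "?split ` ?A \<subseteq> ?B" using split_all_compositions by auto
    show "(\<lambda>(qs, ps). (ps @ qs, length ps)) ` ?B \<subseteq> ?A"
      by (auto simp: all_compositions_def Suc_le_eq)
  qed
  have "finite ?Q"
    by (rule finite_subset[OF _ finite_positive_lists_sum_le[of m]]) auto
  have "(\<Sum>rs\<in>all_compositions m. \<Sum>i=1..length rs. K rs i) = (\<Sum>(rs, i)\<in>?A. K rs i)"
    by (rule sum.Sigma) (auto simp: finite_all_compositions)
  also have "\<dots> = (\<Sum>a\<in>?A. ?K' (?split a))"
    by (rule sum.cong) (auto simp: min_def)
  also have "\<dots> = (\<Sum>b\<in>?B. ?K' b)"
    by (rule sum.reindex_bij_betw[OF bij])
  also have "\<dots> = (\<Sum>qs\<in>?Q. \<Sum>ps\<in>all_compositions (m - sum_list qs). K (ps @ qs) (length ps))"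
    by (rule sum.Sigma[symmetric]) (auto simp: finite_all_compositions \<open>finite ?Q\<close>)
  finally show ?thesis .
qed

section \<open>Brackets of an L-infinity algebra\<close>

lemma linear_between_0:
  assumes "linear_between A B f" "subspace A"
  shows "f 0 = 0"
proof -
  have "f ((-1) *\<^sub>R 0 + 0) = (-1) *\<^sub>R f 0 + f 0"
    using assms subspace_0[OF assms(2)] unfolding linear_between_def by blast
  then show ?thesis by simp
qed

lemma koszul_sign_even_degrees:
  assumes "\<forall>x\<in>set xs. even (fst x)" "\<sigma> permutes {..<length xs}"
  shows "koszul_sign \<sigma> xs = 1"
proof -
  have "even (fst (xs ! \<sigma> a) * fst (xs ! \<sigma> b))" if "a < length xs" for a b
    using assms permutes_in_image[OF assms(2)] that by auto
  then show ?thesis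
    unfolding koszul_sign_def by (auto intro!: dvd_sum)
qed

lemma koszul_sign_id: "koszul_sign id xs = 1"
proof -
  have no_inversions: "{(a, b). a < b \<and> b < length xs \<and> b < a} = {}" by auto
  show ?thesis unfolding koszul_sign_def id_apply no_inversions by simp
qed

abbreviation deg0 :: "(nat \<Rightarrow> 'v) \<Rightarrow> nat list \<Rightarrow> (int \<times> 'v) list" where
  "deg0 u rs \<equiv> map (\<lambda>r. (0, u r)) rs"

locale L_infinity =
  fixes V :: "int \<Rightarrow> 'v::real_vector set" and l :: "nat \<Rightarrow> (int \<times> 'v) list \<Rightarrow> 'v"
  assumes L_infinity_algebra: "L_infinity_algebra V l"
begin

lemma subspace_V: "subspace (V d)"
  using L_infinity_algebra by (simp add: L_infinity_algebra_def graded_space_def)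

lemma bracket_in_V: "homog V xs \<Longrightarrow> l (length xs) xs \<in> V (sum_list (map fst xs) + 1)"
  using L_infinity_algebra by (simp add: L_infinity_algebra_def)

lemma jacobi:
  assumes "xs \<noteq> []" "homog V xs"
  shows "(\<Sum>i=1..length xs. \<Sum>\<sigma>\<in>unshuffles i (length xs).
      koszul_sign \<sigma> xs *\<^sub>R
        (let ys = permute_list \<sigma> xs; as = take i ys
         in l (length xs - i + 1) ((sum_list (map fst as) + 1, l i as) # drop i ys))) = 0"
  using L_infinity_algebra assms by (simp add: L_infinity_algebra_def Suc_le_eq)

lemma bracket_first_linear:
  assumes "a \<in> V d" "b \<in> V d" "homog V ys"
  shows "l (Suc (length ys)) ((d, c *\<^sub>R a + b) # ys) =
    c *\<^sub>R l (Suc (length ys)) ((d, a) # ys) + l (Suc (length ys)) ((d, b) # ys)"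
proof -
  have "multilinear_bracket V (Suc (length ys)) (l (Suc (length ys)))"
    using L_infinity_algebra by (simp add: L_infinity_algebra_def)
  moreover have "homog V ((d, a) # ys)" using assms by (simp add: homog_def)
  ultimately show ?thesis
    using assms unfolding multilinear_bracket_def
    by (metis (no_types, lifting) length_Cons list_update_code(2) nth_Cons_0 fst_conv zero_less_Suc)
qed

lemma bracket_first_zero: "homog V ys \<Longrightarrow> l (Suc (length ys)) ((d, 0) # ys) = 0"
  using bracket_first_linear[of 0 d 0 ys 1] subspace_0[OF subspace_V] by simp

lemma bracket_first_scaleR:
  "a \<in> V d \<Longrightarrow> homog V ys \<Longrightarrow>
    l (Suc (length ys)) ((d, c *\<^sub>R a) # ys) = c *\<^sub>R l (Suc (length ys)) ((d, a) # ys)"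
  using bracket_first_linear[of a d 0 ys c] bracket_first_zero subspace_0[OF subspace_V] by simp

lemma bracket_first_add:
  "a \<in> V d \<Longrightarrow> b \<in> V d \<Longrightarrow> homog V ys \<Longrightarrow>
    l (Suc (length ys)) ((d, a + b) # ys) = l (Suc (length ys)) ((d, a) # ys) + l (Suc (length ys)) ((d, b) # ys)"
  using bracket_first_linear[of a d b ys 1] by simp

lemma bracket_first_sum:
  assumes "finite F" "\<And>x. x \<in> F \<Longrightarrow> v x \<in> V d" "homog V ys"
  shows "l (Suc (length ys)) ((d, \<Sum>x\<in>F. v x) # ys) = (\<Sum>x\<in>F. l (Suc (length ys)) ((d, v x) # ys))"
  using assms
proof (induction F rule: finite_induct)
  case empty
  then show ?case by (simp add: bracket_first_zero)
next
  case (insert x F)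
  then have "(\<Sum>x\<in>F. v x) \<in> V d" by (simp add: subspace_sum[OF subspace_V])
  with insert show ?case by (simp add: bracket_first_add)
qed

lemma l1_l1_eq_0:
  assumes "x \<in> V d"
  shows "l 1 [(d + 1, l 1 [(d, x)])] = 0"
proof -
  have "unshuffles 1 1 = {id}" by (auto simp: unshuffles_def lessThan_Suc)
  then show ?thesis
    using jacobi[of "[(d, x)]"] assms by (simp add: homog_def koszul_sign_id)
qed

lemma Obs_in_V1:
  assumes "\<And>r. r \<le> k \<Longrightarrow> u r \<in> V 0"
  shows "Obs l u k \<in> V 1"
  unfolding Obs_def
proof (intro subspace_sum[OF subspace_V] subspace_scale[OF subspace_V])
  fix i rs assume i: "i \<in> {2..k + 1}" and rs: "rs \<in> compositions i (k + 1)"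
  have "r \<le> k" if "r \<in> set rs" for r
    using compositions_part_less[OF rs _ that] i by simp
  then have "homog V (deg0 u rs)"
    using assms by (auto simp: homog_def)
  from bracket_in_V[OF this] show "l i (deg0 u rs) \<in> V 1"
    using rs by (simp add: compositions_def comp_def)
qed

lemma MC_sequence_in_V0:
  assumes h1: "linear_between (V 1) (V 0) h1" and "u 0 = 0" "u 1 \<in> V 0"
    and rec: "\<forall>k\<ge>1. u (k + 1) = - h1 (Obs l u k)"
  shows "u k \<in> V 0"
proof (induction k rule: less_induct)
  case (less k)
  show ?case
  proof (cases "k \<le> 1")
    case True
    then have "k = 0 \<or> k = 1" by auto
    then show ?thesis using assms subspace_0[OF subspace_V] by auto
  next
    case False
    then obtain j where k: "k = j + 1" and "1 \<le> j"
      using that[of "k - 1"] by simp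
    then have "Obs l u j \<in> V 1" using less by (intro Obs_in_V1) simp
    then have "h1 (Obs l u j) \<in> V 0" using h1 by (simp add: linear_between_def)
    moreover have "u k = - h1 (Obs l u j)" using k \<open>1 \<le> j\<close> rec by simp
    ultimately show ?thesis by (simp add: subspace_neg[OF subspace_V])
  qed
qed

end

section \<open>The curvature of a formal power series\<close>

definition nested_bracket ::
  "(nat \<Rightarrow> (int \<times> 'v) list \<Rightarrow> 'v) \<Rightarrow> (nat \<Rightarrow> 'v) \<Rightarrow> nat \<Rightarrow> nat list \<Rightarrow> 'v" where
  "nested_bracket l u i rs =
     l (length rs - i + 1) ((1, l i (deg0 u (take i rs))) # deg0 u (drop i rs))"

text \<open>The coefficient of t^m/m! in sum_i 1/i! l_i(u[[t]], ..., u[[t]]) for u[[t]] = sum_k u_k t^k/k!.\<close>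

definition MC_curvature ::
  "(nat \<Rightarrow> (int \<times> 'v::real_vector) list \<Rightarrow> 'v) \<Rightarrow> (nat \<Rightarrow> 'v) \<Rightarrow> nat \<Rightarrow> 'v" where
  "MC_curvature l u m =
     (\<Sum>rs\<in>all_compositions m. (multinom m rs / fact (length rs)) *\<^sub>R l (length rs) (deg0 u rs))"

lemma MC_curvature_Suc: "MC_curvature l u (Suc k) = l 1 [(0, u (Suc k))] + Obs l u k"
proof -
  define f where "f rs = (multinom (Suc k) rs / fact (length rs)) *\<^sub>R l (length rs) (deg0 u rs)"
    for rs
  have "MC_curvature l u (Suc k) = (\<Sum>i=1..Suc k. \<Sum>rs\<in>compositions i (Suc k). f rs)"
    by (simp add: MC_curvature_def f_def sum_all_compositions)
  also have "\<dots> = (\<Sum>rs\<in>compositions 1 (Suc k). f rs) + (\<Sum>i=2..Suc k. \<Sum>rs\<in>compositions i (Suc k). f rs)"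
    by (simp add: sum.atLeast_Suc_atMost numeral_2_eq_2)
  also have "(\<Sum>rs\<in>compositions 1 (Suc k). f rs) = l 1 [(0, u (Suc k))]"
    using compositions_1[of "Suc k"] by (simp add: f_def multinom_def)
  also have "(\<Sum>i=2..Suc k. \<Sum>rs\<in>compositions i (Suc k). f rs) = Obs l u k"
    unfolding Obs_def by (auto simp: f_def compositions_def intro!: sum.cong)
  finally show ?thesis .
qed

locale L_infinity_deg0_sequence = L_infinity +
  fixes u :: "nat \<Rightarrow> 'v::real_vector"
  assumes u_in_V0: "u k \<in> V 0"
begin

lemma homog_deg0: "homog V (deg0 u rs)"
  by (auto simp: homog_def u_in_V0)

lemma bracket_deg0_in_V1: "l (length rs) (deg0 u rs) \<in> V 1"
  using bracket_in_V[OF homog_deg0, of rs] by (simp add: comp_def)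

lemma jacobi_deg0:
  assumes "rs \<noteq> []"
  shows "(\<Sum>i=1..length rs. \<Sum>\<sigma>\<in>unshuffles i (length rs). nested_bracket l u i (permute_list \<sigma> rs)) = 0"
proof -
  have "nested_bracket l u i (permute_list \<sigma> rs) =
     koszul_sign \<sigma> (deg0 u rs) *\<^sub>R
       (let ys = permute_list \<sigma> (deg0 u rs); as = take i ys
        in l (length rs - i + 1) ((sum_list (map fst as) + 1, l i as) # drop i ys))"
    if "\<sigma> \<in> unshuffles i (length rs)" for i \<sigma>
  proof -
    have \<sigma>: "\<sigma> permutes {..<length rs}" using that by (simp add: unshuffles_def)
    then have "koszul_sign \<sigma> (deg0 u rs) = 1" by (intro koszul_sign_even_degrees) auto
    moreover have "permute_list \<sigma> (deg0 u rs) = deg0 u (permute_list \<sigma> rs)"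
      by (rule permute_list_map[OF \<sigma>])
    ultimately show ?thesis
      by (simp add: nested_bracket_def Let_def take_map drop_map comp_def)
  qed
  then show ?thesis
    using jacobi[OF _ homog_deg0, of rs] assms by simp
qed

lemma jacobi_deg0_compositions_length:
  "(\<Sum>rs\<in>compositions n m. \<Sum>i=1..n.
      (multinom m rs / (fact i * fact (n - i))) *\<^sub>R nested_bracket l u i rs) = 0"
proof -
  let ?N = "nested_bracket l u"
  have coeff: "multinom m rs / (fact i * fact (n - i)) = (1 / fact n) * (real (n choose i) * multinom m rs)"
    if "i \<in> {1..n}" for i rs
    using that by (simp add: binomial_fact)
  have "(\<Sum>rs\<in>compositions n m. \<Sum>i=1..n. (multinom m rs / (fact i * fact (n - i))) *\<^sub>R ?N i rs) =
      (1 / fact n) *\<^sub>R (\<Sum>i=1..n. real (n choose i) *\<^sub>R (\<Sum>rs\<in>compositions n m. multinom m rs *\<^sub>R ?N i rs))"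
    by (subst sum.swap) (simp add: coeff scaleR_sum_right)
  also have "\<dots> = (1 / fact n) *\<^sub>R (\<Sum>i=1..n. \<Sum>rs\<in>compositions n m. \<Sum>\<sigma>\<in>unshuffles i n.
      multinom m rs *\<^sub>R ?N i (permute_list \<sigma> rs))"
    by (simp add: sum_compositions_unshuffles)
  also have "\<dots> = (1 / fact n) *\<^sub>R (\<Sum>rs\<in>compositions n m. multinom m rs *\<^sub>R
      (\<Sum>i=1..n. \<Sum>\<sigma>\<in>unshuffles i n. ?N i (permute_list \<sigma> rs)))"
    by (subst sum.swap) (simp add: scaleR_sum_right)
  also have "\<dots> = 0"
  proof -
    have "(\<Sum>i=1..n. \<Sum>\<sigma>\<in>unshuffles i n. ?N i (permute_list \<sigma> rs)) = 0"
      if "rs \<in> compositions n m" for rs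
      using that jacobi_deg0[of rs] by (cases "rs = []") (auto simp: compositions_def)
    then show ?thesis by simp
  qed
  finally show ?thesis .
qed

lemma jacobi_deg0_compositions:
  "(\<Sum>rs\<in>all_compositions m. \<Sum>i=1..length rs.
      (multinom m rs / (fact i * fact (length rs - i))) *\<^sub>R nested_bracket l u i rs) = 0"
proof -
  have "(\<Sum>rs\<in>compositions n m. \<Sum>i=1..length rs.
      (multinom m rs / (fact i * fact (length rs - i))) *\<^sub>R nested_bracket l u i rs) =
    (\<Sum>rs\<in>compositions n m. \<Sum>i=1..n.
      (multinom m rs / (fact i * fact (n - i))) *\<^sub>R nested_bracket l u i rs)" for n
    by (rule sum.cong) (auto simp: compositions_def)
  then show ?thesis
    using jacobi_deg0_compositions_length by (simp add: sum_all_compositions)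
qed

lemma sum_nested_brackets_prefix:
  "(\<Sum>ps\<in>all_compositions a. (multinom m (ps @ qs) / (fact (length ps) * fact (length qs))) *\<^sub>R
      nested_bracket l u (length ps) (ps @ qs)) =
   (multinom m qs / (fact a * fact (length qs))) *\<^sub>R
      l (Suc (length qs)) ((1, MC_curvature l u a) # deg0 u qs)"
proof -
  let ?c = "multinom m qs / (fact a * fact (length qs))"
  let ?L = "\<lambda>x. l (Suc (length qs)) ((1, x) # deg0 u qs)"
  define w where "w ps = (multinom a ps / fact (length ps)) *\<^sub>R l (length ps) (deg0 u ps)" for ps
  have w_V1: "w ps \<in> V 1" for ps
    unfolding w_def by (rule subspace_scale[OF subspace_V bracket_deg0_in_V1])
  have "(multinom m (ps @ qs) / (fact (length ps) * fact (length qs))) *\<^sub>R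
      nested_bracket l u (length ps) (ps @ qs) = ?c *\<^sub>R ?L (w ps)"
    if "ps \<in> all_compositions a" for ps
  proof -
    have "sum_list ps = a" using that by (simp add: all_compositions_def)
    then have "multinom m (ps @ qs) / (fact (length ps) * fact (length qs)) =
        ?c * (multinom a ps / fact (length ps))"
      using multinom_append[of m ps qs] by (simp add: field_simps)
    moreover have "nested_bracket l u (length ps) (ps @ qs) = ?L (l (length ps) (deg0 u ps))"
      by (simp add: nested_bracket_def)
    ultimately show ?thesis
      using bracket_first_scaleR[OF bracket_deg0_in_V1 homog_deg0] by (simp add: w_def)
  qed
  then have "(\<Sum>ps\<in>all_compositions a. (multinom m (ps @ qs) / (fact (length ps) * fact (length qs))) *\<^sub>R
      nested_bracket l u (length ps) (ps @ qs)) = ?c *\<^sub>R (\<Sum>ps\<in>all_compositions a. ?L (w ps))"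
    by (simp add: scaleR_sum_right)
  also have "(\<Sum>ps\<in>all_compositions a. ?L (w ps)) = ?L (\<Sum>ps\<in>all_compositions a. w ps)"
    using bracket_first_sum[OF finite_all_compositions w_V1 homog_deg0] by simp
  also have "(\<Sum>ps\<in>all_compositions a. w ps) = MC_curvature l u a"
    by (simp add: MC_curvature_def w_def)
  finally show ?thesis .
qed

lemma bianchi_MC_curvature:
  assumes lower: "\<And>a. 0 < a \<Longrightarrow> a < m \<Longrightarrow> MC_curvature l u a = 0"
  shows "l 1 [(1, MC_curvature l u m)] = 0"
proof -
  let ?Q = "{qs. (\<forall>r\<in>set qs. 0 < r) \<and> sum_list qs < m}"
  let ?K = "\<lambda>rs i. (multinom m rs / (fact i * fact (length rs - i))) *\<^sub>R nested_bracket l u i rs"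
  let ?F = "l 1 [(1, MC_curvature l u m)]"
  have "0 = (\<Sum>rs\<in>all_compositions m. \<Sum>i=1..length rs. ?K rs i)"
    by (rule jacobi_deg0_compositions[symmetric])
  also have "\<dots> = (\<Sum>qs\<in>?Q. \<Sum>ps\<in>all_compositions (m - sum_list qs). ?K (ps @ qs) (length ps))"
    by (rule sum_all_compositions_split)
  also have "\<dots> = (\<Sum>qs\<in>?Q. (multinom m qs / (fact (m - sum_list qs) * fact (length qs))) *\<^sub>R
      l (Suc (length qs)) ((1, MC_curvature l u (m - sum_list qs)) # deg0 u qs))"
    by (simp add: sum_nested_brackets_prefix)
  also have "\<dots> = (\<Sum>qs\<in>?Q. if qs = [] then ?F else 0)"
  proof (rule sum.cong[OF refl])
    fix qs assume qs: "qs \<in> ?Q"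
    show "(multinom m qs / (fact (m - sum_list qs) * fact (length qs))) *\<^sub>R
        l (Suc (length qs)) ((1, MC_curvature l u (m - sum_list qs)) # deg0 u qs) =
      (if qs = [] then ?F else 0)"
    proof (cases "qs = []")
      case False
      then have "0 < sum_list qs" using qs by (cases qs) auto
      then have "MC_curvature l u (m - sum_list qs) = 0" using lower qs by simp
      then show ?thesis using False bracket_first_zero[OF homog_deg0] by simp
    qed (simp add: multinom_def)
  qed
  also have "\<dots> = (if [] \<in> ?Q then ?F else 0)"
    by (rule sum.delta) (rule finite_subset[OF _ finite_positive_lists_sum_le[of m]], auto)
  also have "\<dots> = ?F"
  proof -
    have "all_compositions 0 = {}" by (auto simp: all_compositions_def neq_Nil_conv)
    then show ?thesis
      using bracket_first_zero[of "[]" 1] by (auto simp: MC_curvature_def homog_def)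
  qed
  finally show ?thesis by simp
qed

lemma MC_curvature_Suc_eq_0:
  assumes h1: "linear_between (V 1) (V 0) h1" and h2: "linear_between (V 2) (V 1) h2"
    and htpy: "\<forall>x\<in>V 1. l 1 [(0, h1 x)] + h2 (l 1 [(1, x)]) = x"
    and u_Suc: "u (Suc k) = - h1 (Obs l u k)"
    and lower: "\<And>a. 0 < a \<Longrightarrow> a \<le> k \<Longrightarrow> MC_curvature l u a = 0"
  shows "MC_curvature l u (Suc k) = 0"
proof -
  let ?O = "Obs l u k"
  have O: "?O \<in> V 1" using Obs_in_V1 u_in_V0 by blast
  have l1_u: "l 1 [(0, u (Suc k))] \<in> V 1" using bracket_deg0_in_V1[of "[Suc k]"] by simp
  have "l 1 [(1, l 1 [(0, u (Suc k))])] + l 1 [(1, ?O)] = l 1 [(1, MC_curvature l u (Suc k))]"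
    using bracket_first_add[OF l1_u O, of "[]"] by (simp add: MC_curvature_Suc homog_def)
  also have "\<dots> = 0" by (rule bianchi_MC_curvature) (use lower in simp)
  finally have "l 1 [(1, ?O)] = 0" using l1_l1_eq_0[OF u_in_V0, of "Suc k"] by simp
  then have "l 1 [(0, h1 ?O)] = ?O" using htpy O linear_between_0[OF h2 subspace_V] by force
  moreover have "h1 ?O \<in> V 0" using h1 O by (simp add: linear_between_def)
  ultimately show ?thesis
    using bracket_first_scaleR[of "h1 ?O" 0 "[]" "-1"] u_Suc by (simp add: MC_curvature_Suc homog_def)
qed

end

theorem proposition5p12:
  fixes V :: "int \<Rightarrow> 'v::real_vector set"
    and l :: "nat \<Rightarrow> (int \<times> 'v) list \<Rightarrow> 'v"
    and n :: nat
    and h1 h2 :: "'v \<Rightarrow> 'v"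
    and u :: "nat \<Rightarrow> 'v"
  assumes Linf: "L_infinity_algebra V l"
    and fin: "finite_dim_components V"
    and V0: "dim (V 0) = n"
    and H1: "H1_vanishes V l"
    and h1: "linear_between (V 1) (V 0) h1"
    and h2: "linear_between (V 2) (V 1) h2"
    and htpy: "\<forall>x\<in>V 1. l 1 [(0, h1 x)] + h2 (l 1 [(1, x)]) = x"
    and u0: "u 0 = 0"
    and u1: "u 1 \<in> V 0" "l 1 [(0, u 1)] = 0"
    and urec: "\<forall>k\<ge>1. u (k + 1) = - h1 (Obs l u k)"
  shows "formal_MC V l u"
proof -
  \<comment> \<open>The homotopy already forces H^1 = 0.\<close>
  interpret L_infinity V l by (rule L_infinity.intro[OF Linf])
  have u_V0: "u k \<in> V 0" for k by (rule MC_sequence_in_V0[OF h1 u0 u1(1) urec])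
  interpret L_infinity_deg0_sequence V l u by unfold_locales (rule u_V0)
  have "MC_curvature l u (Suc k) = 0" for k
  proof (induction k rule: less_induct)
    case (less k)
    show ?case
    proof (cases "k = 0")
      case True
      then show ?thesis using u1(2) by (simp add: MC_curvature_Suc Obs_def)
    next
      case False
      with urec have "u (Suc k) = - h1 (Obs l u k)" by simp
      moreover have "MC_curvature l u a = 0" if "0 < a" "a \<le> k" for a
        using less.IH[of "a - 1"] that by simp
      ultimately show ?thesis by (rule MC_curvature_Suc_eq_0[OF h1 h2 htpy])
    qed
  qed
  then show ?thesis
    using u0 u_V0 by (simp add: formal_MC_def MC_curvature_Suc)
qed

end
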